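(* Let $n\ge 1$ and let $\tau\in S_n$ have runs (maximal increasing contiguous segments), read from left to right, of lengths $\rho_k,\dots,\rho_1,\rho_0$ (so $\rho_0$ is the length of the last run and $\tau$ has $k+1$ runs). Let $0\le l\le k$. Then $$\sum_{\substack{Pr\in \mathcal{P}ref_n\\ \operatorname{diagword}(Pr)=\tau\\ l(Pr)=l}} t^{\operatorname{area}(Pr)}q^{\operatorname{dinv}(Pr)} = t^{\operatorname{maj}(\tau)}\, q^{\rho_0+\rho_1+\dots+\rho_{l-1}}\prod_{c=1}^n [w^{(l)}(c)]_q ,$$ where $w^{(l)}(c)$ are the $l$-schedule numbers of $\tau$ defined below.
   Context: A preference function on $n$ cars is a map $f:[n]\to[n]$; $\mathcal{P}ref_n$ is the set of all $n^n$ of them. Each is drawn as a labeled lattice path in the $n\times n$ grid: for $j=1,\dots,n$ in turn, the cars $i\in f^{-1}(j)$ are written in column $j$ (the unit cells with lower-left corner $(j-1,y)$), in increasing order from bottom to top, occupying the lowest rows not yet used; each row contains exactly one car. A car whose cell has lower-left corner $(x,y)$ is said to lie in diagonal $y-x$ (the $k$-th diagonal is the line $y=x+k$). The deviation $l(Pr)$ is the maximum of $-(\text{diagonal of }c)$ over all cars $c$ (this is always $\ge 0$). $\operatorname{area}(Pr)=\sum_{\text{cars } c}(d(c)+l(Pr))$, where $d(c)$ is the diagonal of $c$. $\operatorname{dinv}(Pr)$ is the sum of: the number of primary dinvs (pairs of cars in the same diagonal such that the car further left is smaller), the number of secondary dinvs (pairs of cars $b<a$ with $a$ in diagonal $m+1$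 and $b$ in diagonal $m$ for some $m$, and $b$ in a column strictly to the right of $a$), and the tertiary dinv (the number of cars in negative diagonals). The diagonal word $\operatorname{diagword}(Pr)\in S_n$ lists the cars of each nonempty diagonal in increasing order, the diagonals taken from highest to lowest. For a permutation $\tau$, $\operatorname{maj}(\tau)$ is the sum of the positions $i$ with $\tau_i>\tau_{i+1}$; $[m]_q=1+q+\dots+q^{m-1}$. $l$-schedule numbers: let $l\ge0$ and let $\tau$ have at least $l+1$ runs. For $1\le c\le n$: if $c$ lies in one of the last $l$ runs of $\tau$, $w^{(l)}(c)$ is the number of elements smaller than $c$ in its own run plus the number of elements larger than $c$ in the previous run; if $c$ lies in the $(l+1)$-st run from the end, $w^{(l)}(c)$ is the number of elements of that run weakly to the right of $c$ (counting $c$ itself); otherwise $w^{(l)}(c)$ is the number of elements larger than $c$ in its own run plus the number of elements smaller than $c$ in the next run. (Example: for $\tau=2\,3\,1\,4\,5$, $w^{(1)}(3)=1$, $w^{(1)}(2)=2$, $w^{(1)}(1)=2$, $w^{(1)}(4)=1$, $w^{(1)}(5)=2$.) *)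

theory Defs
  imports "HOL-Library.FuncSet" "HOL-Library.Product_Lexorder"
begin

text \<open>Car i is placed in column f i (lower-left x = f i - 1);
  its row (lower-left y) is the number of cars placed before it, i.e. cars c with
  f c < f i, or f c = f i and c < i.\<close>

definition pref_fns :: "nat \<Rightarrow> (nat \<Rightarrow> nat) set" where
  "pref_fns n = {1..n} \<rightarrow>\<^sub>E {1..n}"

definition car_row :: "nat \<Rightarrow> (nat \<Rightarrow> nat) \<Rightarrow> nat \<Rightarrow> nat" where
  "car_row n f i = card {c \<in> {1..n}. f c < f i \<or> (f c = f i \<and> c < i)}"

definition car_diag :: "nat \<Rightarrow> (nat \<Rightarrow> nat) \<Rightarrow> nat \<Rightarrow> int" where
  "car_diag n f i = int (car_row n f i) - (int (f i) - 1)"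

definition deviation :: "nat \<Rightarrow> (nat \<Rightarrow> nat) \<Rightarrow> int" where
  "deviation n f = Max ((\<lambda>c. - car_diag n f c) ` {1..n})"

definition area :: "nat \<Rightarrow> (nat \<Rightarrow> nat) \<Rightarrow> int" where
  "area n f = (\<Sum>c\<in>{1..n}. car_diag n f c + deviation n f)"

definition primary_dinv :: "nat \<Rightarrow> (nat \<Rightarrow> nat) \<Rightarrow> nat" where
  "primary_dinv n f = card {(a, b). a \<in> {1..n} \<and> b \<in> {1..n} \<and>
      car_diag n f a = car_diag n f b \<and> f a < f b \<and> a < b}"

definition secondary_dinv :: "nat \<Rightarrow> (nat \<Rightarrow> nat) \<Rightarrow> nat" where
  "secondary_dinv n f = card {(a, b). a \<in> {1..n} \<and> b \<in> {1..n} \<and> b < a \<and>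
      car_diag n f a = car_diag n f b + 1 \<and> f a < f b}"

definition tertiary_dinv :: "nat \<Rightarrow> (nat \<Rightarrow> nat) \<Rightarrow> nat" where
  "tertiary_dinv n f = card {c \<in> {1..n}. car_diag n f c < 0}"

definition dinv :: "nat \<Rightarrow> (nat \<Rightarrow> nat) \<Rightarrow> nat" where
  "dinv n f = primary_dinv n f + secondary_dinv n f + tertiary_dinv n f"

definition diagword :: "nat \<Rightarrow> (nat \<Rightarrow> nat) \<Rightarrow> nat list" where
  "diagword n f = sort_key (\<lambda>c. (- car_diag n f c, c)) [1..<n+1]"

definition is_perm_word :: "nat \<Rightarrow> nat list \<Rightarrow> bool" where
  "is_perm_word n \<tau> \<longleftrightarrow> distinct \<tau> \<and> set \<tau> = {1..n}"

definition maj :: "nat list \<Rightarrow> nat" where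
  "maj \<tau> = (\<Sum>i\<in>{1..<length \<tau>}. if \<tau> ! (i - 1) > \<tau> ! i then i else 0)"

fun runs :: "nat list \<Rightarrow> nat list list" where
  "runs [] = []"
| "runs (x # xs) = (case runs xs of
       [] \<Rightarrow> [[x]]
     | r # rs \<Rightarrow> (if x < hd r then (x # r) # rs else [x] # r # rs))"

definition rho :: "nat list \<Rightarrow> nat \<Rightarrow> nat" where
  "rho \<tau> i = length (runs \<tau> ! (length (runs \<tau>) - 1 - i))"

definition run_idx :: "nat list \<Rightarrow> nat \<Rightarrow> nat" where
  "run_idx \<tau> c = (LEAST j. j < length (runs \<tau>) \<and> c \<in> set (runs \<tau> ! j))"

definition sched :: "nat \<Rightarrow> nat list \<Rightarrow> nat \<Rightarrow> nat" where
  "sched l \<tau> c = (let R = runs \<tau>; m = length R; j = run_idx \<tau> c in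
     if m - l \<le> j then
       length (filter (\<lambda>x. x < c) (R ! j)) + length (filter (\<lambda>x. c < x) (R ! (j - 1)))
     else if j = m - l - 1 then
       length (dropWhile (\<lambda>x. x \<noteq> c) (R ! j))
     else
       length (filter (\<lambda>x. c < x) (R ! j)) + length (filter (\<lambda>x. x < c) (R ! (j + 1))))"

definition qint :: "nat \<Rightarrow> 'a::comm_semiring_1 \<Rightarrow> 'a" where
  "qint m q = (\<Sum>i<m. q ^ i)"

lemma sched_example:
  "sched 1 [2,3,1,4,5] 3 = 1 \<and> sched 1 [2,3,1,4,5] 2 = 2 \<and> sched 1 [2,3,1,4,5] 1 = 2
  \<and> sched 1 [2,3,1,4,5] 4 = 1 \<and> sched 1 [2,3,1,4,5] 5 = 2"
proof -
  have r: "runs [2,3,1,4,5] = [[2,3],[1,4,5]]" by simp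
  have a: "run_idx [2,3,1,4,5] 2 = 0" "run_idx [2,3,1,4,5] 3 = 0"
    unfolding run_idx_def r by (rule Least_equality; simp)+
  have b: "run_idx [2,3,1,4,5] c = 1" if "c \<in> {1,4,5}" for c
    unfolding run_idx_def r using that
    by (intro Least_equality) (auto simp: less_Suc_eq)
  show ?thesis using a b[of 1] b[of 4] b[of 5] by (simp add: sched_def Let_def r)
qed

end

theory Submission
  imports Defs "HOL-Library.Multiset"
begin

text \<open>Reading the cars of a preference function row by row from the bottom gives a word, and the
  function is recovered from this word and the diagonals of its cars: a car in row \<open>r\<close> and
  diagonal \<open>d\<close> lies in column \<open>r - d + 1\<close>.  The diagword \<open>\<tau>\<close> and the deviation \<open>l\<close> force the
  diagonals.  Along an admissible reading word every level between the lowest and the highest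
  diagonal is crossed upwards by an ascent of car labels, so the groups of cars by diagonal are
  exactly the runs of \<open>\<tau>\<close>, the \<open>j\<close>-th run from the left lying in diagonal \<open>k - l - j\<close>.

  So the preference functions in question correspond to the admissible words for one fixed diagonal
  function.  All of them have area \<open>maj \<tau>\<close> and tertiary dinv \<open>\<rho>\<^sub>0 + \<dots> + \<rho>\<^bsub>l-1\<^esub>\<close>, while
  primary plus secondary dinv becomes an inversion statistic of the word.  Its generating function
  factorises: inserting the cars one at a time in a suitable order, car \<open>c\<close> has exactly
  \<open>sched l \<tau> c\<close> possible places, which raise the statistic by \<open>0, 1, \<dots>, sched l \<tau> c - 1\<close>.\<close>

section \<open>Runs and the major index\<close>

lemma runs_structure:
  "concat (runs xs) = xs \<and> (\<forall>r\<in>set (runs xs). r \<noteq> [] \<and> sorted_wrt (<) r)"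
proof (induction xs)
  case Nil then show ?case by simp
next
  case (Cons x xs)
  show ?case
  proof (cases "runs xs")
    case Nil
    then show ?thesis using Cons by simp
  next
    case (Cons r rs)
    then have "r \<noteq> []" "sorted_wrt (<) r" "hd r = hd xs" "concat (r # rs) = xs"
      using Cons.IH by (auto simp: hd_append)
    then show ?thesis using Cons.IH Cons by (cases r) auto
  qed
qed

lemma concat_runs [simp]: "concat (runs xs) = xs"
  using runs_structure by blast

lemma runs_nonempty: "r \<in> set (runs xs) \<Longrightarrow> r \<noteq> []"
  using runs_structure by blast

lemma sorted_runs: "r \<in> set (runs xs) \<Longrightarrow> sorted_wrt (<) r"
  using runs_structure by blast

lemma hd_hd_runs: "runs xs = r # rs \<Longrightarrow> hd r = hd xs"
  using concat_runs[of xs] runs_nonempty[of r xs] by (cases r) auto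

lemma runs_append_run:
  assumes "r \<noteq> []" "sorted_wrt (<) r" "ys = [] \<or> \<not> last r < hd ys"
  shows "runs (r @ ys) = r # runs ys"
  using assms
proof (induction r)
  case Nil then show ?case by simp
next
  case (Cons x r)
  show ?case
  proof (cases "r = []")
    case True
    show ?thesis
    proof (cases "runs ys")
      case Nil
      then show ?thesis using True concat_runs[of ys] by simp
    next
      case (Cons r' rs')
      then have "ys \<noteq> []" "hd r' = hd ys"
        using concat_runs[of ys] runs_nonempty[of r' ys] hd_hd_runs by auto
      then show ?thesis using True Cons Cons.prems by auto
    qed
  next
    case False
    then have "runs (r @ ys) = r # runs ys" "x < hd r" using Cons by (cases r; auto)+
    then show ?thesis using False by (simp add: hd_append)
  qed
qed

lemma runs_concat:
  assumes "\<forall>b\<in>set Bs. b \<noteq> [] \<and> sorted_wrt (<) b"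
    and "successively (\<lambda>a b. \<exists>x\<in>set a. \<exists>y\<in>set b. y < (x::nat)) Bs"
  shows "runs (concat Bs) = Bs"
  using assms
proof (induction Bs)
  case Nil then show ?case by simp
next
  case (Cons b Bs)
  have "concat Bs = [] \<or> \<not> last b < hd (concat Bs)"
  proof (cases Bs)
    case (Cons b' Bs')
    then obtain x y where "x \<in> set b" "y \<in> set b'" "y < x"
      using Cons.prems by (auto simp: successively_Cons)
    moreover have "b' \<noteq> []" "sorted_wrt (<) b'" "sorted_wrt (<) b" using Cons.prems Cons by auto
    moreover have "x \<le> last b"
      using \<open>sorted_wrt (<) b\<close> \<open>x \<in> set b\<close>
      by (induction b) (auto, metis last_in_set less_imp_le empty_iff list.set(1))
    ultimately show ?thesis using Cons by (cases b') auto
  qed simp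
  then show ?case using runs_append_run[of b "concat Bs"] Cons by (auto simp: successively_Cons)
qed

definition descents :: "nat list \<Rightarrow> nat" where
  "descents xs = (\<Sum>i\<in>{1..<length xs}. if xs ! (i - 1) > xs ! i then 1 else 0)"

fun runs_maj :: "nat list list \<Rightarrow> nat" where
  "runs_maj [] = 0"
| "runs_maj (b # R) = length b * length R + runs_maj R"

lemma sum_adjacent_Cons:
  assumes "xs \<noteq> []"
  shows "(\<Sum>i\<in>{1..<length (x # xs)}. f ((x # xs) ! (i - 1)) ((x # xs) ! i) i)
       = f x (hd xs) 1 + (\<Sum>i\<in>{1..<length xs}. f (xs ! (i - 1)) (xs ! i) (Suc i))"
proof -
  have "{1..<length (x # xs)} = insert 1 {Suc 1..<Suc (length xs)}" using assms by (cases xs) auto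
  then have "(\<Sum>i\<in>{1..<length (x # xs)}. f ((x # xs) ! (i - 1)) ((x # xs) ! i) i)
     = f x (xs ! 0) 1 + (\<Sum>i\<in>{Suc 1..<Suc (length xs)}. f ((x # xs) ! (i - 1)) ((x # xs) ! i) i)"
    by simp
  also have "(\<Sum>i\<in>{Suc 1..<Suc (length xs)}. f ((x # xs) ! (i - 1)) ((x # xs) ! i) i)
      = (\<Sum>i\<in>{1..<length xs}. f (xs ! (i - 1)) (xs ! i) (Suc i))"
    by (subst sum.shift_bounds_Suc_ivl) (auto intro!: sum.cong simp: nth_Cons')
  finally show ?thesis using assms by (simp add: hd_conv_nth)
qed

lemma descents_Cons:
  "xs \<noteq> [] \<Longrightarrow> descents (x # xs) = descents xs + (if x > hd xs then 1 else 0)"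
proof -
  assume ne: "xs \<noteq> []"
  let ?f = "\<lambda>a b (i::nat). if a > b then 1 else 0"
  have "descents (x # xs) = (\<Sum>i\<in>{1..<length (x # xs)}. ?f ((x # xs) ! (i - 1)) ((x # xs) ! i) i)"
    unfolding descents_def by simp
  also have "\<dots> = ?f x (hd xs) 1 + (\<Sum>i\<in>{1..<length xs}. ?f (xs ! (i - 1)) (xs ! i) (Suc i))"
    by (rule sum_adjacent_Cons[OF ne])
  finally show ?thesis by (simp add: descents_def)
qed

lemma maj_Cons:
  assumes "xs \<noteq> []"
  shows "maj (x # xs) = maj xs + descents xs + (if x > hd xs then 1 else 0)"
proof -
  have "maj (x # xs) = (if x > hd xs then 1 else 0)
      + (\<Sum>i\<in>{1..<length xs}. if xs ! (i - 1) > xs ! i then Suc i else 0)"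
    using sum_adjacent_Cons[OF assms, of "\<lambda>a b i. if a > b then i else 0" x] by (simp add: maj_def)
  also have "(\<Sum>i\<in>{1..<length xs}. if xs ! (i - 1) > xs ! i then Suc i else 0)
     = (\<Sum>i\<in>{1..<length xs}. (if xs ! (i - 1) > xs ! i then i else 0)
                            + (if xs ! (i - 1) > xs ! i then 1 else 0))"
    by (intro sum.cong) auto
  finally show ?thesis unfolding sum.distrib maj_def descents_def by simp
qed

lemma length_runs_and_maj:
  "distinct xs \<Longrightarrow> xs \<noteq> [] \<Longrightarrow> length (runs xs) = descents xs + 1 \<and> maj xs = runs_maj (runs xs)"
proof (induction xs)
  case (Cons x xs)
  show ?case
  proof (cases "xs = []")
    case True then show ?thesis by (simp add: maj_def descents_def)
  next
    case False
    then obtain r rs where R: "runs xs = r # rs"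
      using concat_runs[of xs] by (cases "runs xs") auto
    have "x \<noteq> hd xs" using Cons.prems False by (cases xs) auto
    then show ?thesis
      using Cons hd_hd_runs[OF R] R False by (auto simp: maj_Cons descents_Cons)
  qed
qed simp

lemma runs_maj_eq_sum: "runs_maj R = (\<Sum>j<length R. length (R ! j) * (length R - 1 - j))"
  by (induction R) (simp_all add: sum.lessThan_Suc_shift del: sum.lessThan_Suc)

lemma maj_eq_sum_runs:
  "distinct xs \<Longrightarrow> maj xs = (\<Sum>j<length (runs xs). length (runs xs ! j) * (length (runs xs) - 1 - j))"
  using length_runs_and_maj[of xs] runs_maj_eq_sum by (cases xs) (auto simp: maj_def)

fun position :: "nat list \<Rightarrow> nat \<Rightarrow> nat" where
  "position [] c = 0"
| "position (x # xs) c = (if x = c then 0 else Suc (position xs c))"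

lemma position_nth: "c \<in> set xs \<Longrightarrow> position xs c < length xs \<and> xs ! position xs c = c"
  by (induction xs) auto

lemma position_of_nth: "distinct xs \<Longrightarrow> i < length xs \<Longrightarrow> position xs (xs ! i) = i"
  by (induction xs arbitrary: i) (auto simp: nth_Cons split: nat.split)

lemma card_key_less_nth:
  fixes key :: "'a \<Rightarrow> 'b::linorder"
  assumes srt: "sorted_wrt (\<lambda>a b. key a < key b) w" and i: "i < length w"
  shows "card {x \<in> set w. key x < key (w ! i)} = i"
proof -
  have "distinct w"
    using srt strict_sorted_iff[of "map key w"] by (simp add: sorted_wrt_map distinct_map)
  moreover have "{x \<in> set w. key x < key (w ! i)} = set (take i w)"
  proof (intro equalityI subsetI)
    fix x assume "x \<in> {x \<in> set w. key x < key (w ! i)}"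
    then obtain j where j: "j < length w" "w ! j = x" "key (w ! j) < key (w ! i)"
      by (auto simp: in_set_conv_nth)
    then have "j < i" using sorted_wrt_nth_less[OF srt, of i j] i by (metis less_asym nat_neq_iff)
    then show "x \<in> set (take i w)" using j by (auto simp: in_set_conv_nth)
  next
    fix x assume "x \<in> set (take i w)"
    then obtain j where "j < i" "w ! j = x" using i by (auto simp: in_set_conv_nth)
    then show "x \<in> {x \<in> set w. key x < key (w ! i)}"
      using sorted_wrt_nth_less[OF srt _ i] i by auto
  qed
  ultimately show ?thesis using i by (simp add: distinct_card)
qed

lemma dropWhile_neq_eq_filter:
  "sorted_wrt (<) xs \<Longrightarrow> c \<in> set xs \<Longrightarrow> dropWhile (\<lambda>x. x \<noteq> c) xs = filter (\<lambda>x. (c::nat) \<le> x) xs"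
  by (induction xs) (auto simp: filter_id_conv less_imp_le)

lemma sorted_wrt_concat_blocks:
  fixes g :: "nat \<Rightarrow> nat"
  assumes "\<forall>i<length Bs. \<forall>x\<in>set (Bs ! i). g x = i + m" and "\<forall>b\<in>set Bs. sorted_wrt (<) b"
  shows "sorted_wrt (\<lambda>a b. g a < g b \<or> (g a = g b \<and> a < b)) (concat Bs)"
  using assms
proof (induction Bs arbitrary: m)
  case (Cons b Bs)
  have gb: "\<forall>x\<in>set b. g x = m" using Cons.prems(1) by force
  have gBs: "\<forall>i<length Bs. \<forall>x\<in>set (Bs ! i). g x = i + Suc m" using Cons.prems(1) by fastforce
  have "\<forall>x\<in>set b. \<forall>y\<in>set (concat Bs). g x < g y"
  proof (intro ballI)
    fix x y assume "x \<in> set b" "y \<in> set (concat Bs)"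
    then obtain bb where "bb \<in> set Bs" "y \<in> set bb" by auto
    then obtain i where "i < length Bs" "y \<in> set (Bs ! i)" by (metis in_set_conv_nth)
    then show "g x < g y" using gBs gb \<open>x \<in> set b\<close> by auto
  qed
  moreover have "sorted_wrt (\<lambda>a b. g a < g b \<or> (g a = g b \<and> a < b)) b"
    using Cons.prems(2) gb by (auto intro: sorted_wrt_mono_rel[of _ "(<)"])
  ultimately show ?case using Cons.IH[OF gBs] Cons.prems(2) by (auto simp: sorted_wrt_append)
qed simp

section \<open>Admissible words\<close>

text \<open>A step from \<open>x\<close> to the next car \<open>y\<close> is allowed iff \<open>y\<close> sits weakly to the right of \<open>x\<close>
  (car \<open>c\<close> in row \<open>r\<close>, counted from \<open>0\<close>, sits in column \<open>r - d c + 1\<close>), and only above a smaller car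
  in the same column; the conditions on the first and last car keep all columns within \<open>1..n\<close>.\<close>
definition diag_step :: "(nat \<Rightarrow> int) \<Rightarrow> nat \<Rightarrow> nat \<Rightarrow> bool" where
  "diag_step d x y \<longleftrightarrow> d y \<le> d x + 1 \<and> (d y = d x + 1 \<longrightarrow> x < y)"

definition admissible :: "(nat \<Rightarrow> int) \<Rightarrow> nat list \<Rightarrow> bool" where
  "admissible d w \<longleftrightarrow>
     successively (diag_step d) w \<and> (w \<noteq> [] \<longrightarrow> d (hd w) \<le> 0 \<and> 0 \<le> d (last w))"

definition admissible_words :: "(nat \<Rightarrow> int) \<Rightarrow> nat set \<Rightarrow> nat list set" where
  "admissible_words d A = {w. distinct w \<and> set w = A \<and> admissible d w}"

definition dinv_pair :: "(nat \<Rightarrow> int) \<Rightarrow> nat \<Rightarrow> nat \<Rightarrow> bool" where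
  "dinv_pair d x y \<longleftrightarrow> (d x = d y \<and> x < y) \<or> (d x = d y + 1 \<and> y < x)"

fun word_dinv :: "(nat \<Rightarrow> int) \<Rightarrow> nat list \<Rightarrow> nat" where
  "word_dinv d [] = 0"
| "word_dinv d (x # xs) = length (filter (dinv_pair d x) xs) + word_dinv d xs"

definition dinv_gf :: "(nat \<Rightarrow> int) \<Rightarrow> nat set \<Rightarrow> 'a::comm_ring_1 \<Rightarrow> 'a" where
  "dinv_gf d A q = (\<Sum>w\<in>admissible_words d A. q ^ word_dinv d w)"

lemma finite_admissible_words: "finite A \<Longrightarrow> finite (admissible_words d A)"
  by (rule finite_subset[of _ "{w. set w \<subseteq> A \<and> length w \<le> card A}"])
     (auto simp: admissible_words_def distinct_card finite_lists_length_le)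

lemma dinv_gf_empty: "dinv_gf d {} q = 1"
proof -
  have "admissible_words d {} = {[]}" by (auto simp: admissible_words_def admissible_def)
  then show ?thesis by (simp add: dinv_gf_def)
qed

lemma word_dinv_insert:
  "word_dinv d (u @ c # v)
     = word_dinv d (u @ v) + length (filter (dinv_pair d c) v) + length (filter (\<lambda>x. dinv_pair d x c) u)"
  by (induction u) auto

lemma admissible_insert_iff:
  "admissible d (u @ c # v) \<longleftrightarrow>
     successively (diag_step d) u \<and> successively (diag_step d) v \<and>
     (u \<noteq> [] \<longrightarrow> diag_step d (last u) c) \<and> (v \<noteq> [] \<longrightarrow> diag_step d c (hd v)) \<and>
     d (hd (u @ [c])) \<le> 0 \<and> 0 \<le> d (last (c # v))"
  unfolding admissible_def
  by (cases u; cases v) (auto simp: successively_append_iff successively_Cons)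

lemma admissible_append_iff:
  "admissible d (u @ v) \<longleftrightarrow>
     successively (diag_step d) u \<and> successively (diag_step d) v \<and>
     (u \<noteq> [] \<longrightarrow> v \<noteq> [] \<longrightarrow> diag_step d (last u) (hd v)) \<and>
     (u @ v \<noteq> [] \<longrightarrow> d (hd (u @ v)) \<le> 0 \<and> 0 \<le> d (last (u @ v)))"
  unfolding admissible_def by (auto simp: successively_append_iff)

lemma admissible_cong: "(\<And>c. c \<in> set w \<Longrightarrow> D c = D' c) \<Longrightarrow> admissible D w = admissible D' w"
  unfolding admissible_def diag_step_def
  by (intro arg_cong2[where f="(\<and>)"] successively_cong) auto

lemma admissible_step_nth: "admissible d w \<Longrightarrow> Suc r < length w \<Longrightarrow> diag_step d (w ! r) (w ! Suc r)"
  unfolding admissible_def using successively_nth by blast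

lemma admissible_diag_le: "admissible d w \<Longrightarrow> r < length w \<Longrightarrow> d (w ! r) \<le> int r"
proof (induction r)
  case 0 then show ?case by (cases w) (auto simp: admissible_def)
next
  case (Suc r)
  then show ?case using admissible_step_nth[OF Suc.prems] by (auto simp: diag_step_def)
qed

lemma admissible_diag_ge:
  assumes w: "admissible d w" and r: "r < length w"
  shows "int r + 1 - int (length w) \<le> d (w ! r)"
proof -
  have "r \<le> length w - 1" using r by simp
  then show ?thesis
  proof (induction r rule: inc_induct)
    case base then show ?case using w r by (auto simp: admissible_def last_conv_nth)
  next
    case (step m)
    then have "Suc m < length w" by linarith
    then show ?case using step admissible_step_nth[OF w, of m] by (auto simp: diag_step_def)
  qed
qed

lemma admissible_ascent_between:
  "admissible d w \<Longrightarrow> s < t \<Longrightarrow> t < length w \<Longrightarrow> d (w ! s) \<le> v \<Longrightarrow> v < d (w ! t) \<Longrightarrow>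
   \<exists>r. s \<le> r \<and> r < t \<and> d (w ! r) = v \<and> d (w ! Suc r) = v + 1 \<and> w ! r < w ! Suc r"
proof (induction t)
  case (Suc t)
  have g: "diag_step d (w ! t) (w ! Suc t)" using admissible_step_nth Suc.prems by blast
  show ?case
  proof (cases "d (w ! t) \<le> v")
    case True
    then show ?thesis using g Suc.prems by (intro exI[of _ t]) (auto simp: diag_step_def)
  next
    case False
    then have "s < t" using Suc.prems by (metis less_SucE)
    then show ?thesis using Suc False by fastforce
  qed
qed simp

text \<open>If the lower car comes after the higher one, the crossing is found before the higher car (the
  word starts in a nonpositive diagonal) or after the lower one (it ends in a nonnegative diagonal).\<close>
lemma admissible_crossing:
  assumes w: "admissible d w" and xy: "x \<in> set w" "y \<in> set w" "d x \<le> v" "v < d y"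
  shows "\<exists>a\<in>set w. \<exists>b\<in>set w. d a = v + 1 \<and> d b = v \<and> b < a"
proof -
  obtain i j where ij: "i < length w" "w ! i = x" "j < length w" "w ! j = y"
    using xy by (auto simp: in_set_conv_nth)
  have ends: "d (w ! 0) \<le> 0" "0 \<le> d (w ! (length w - 1))"
    using w ij by (auto simp: admissible_def hd_conv_nth last_conv_nth)
  have "\<exists>s t. s < t \<and> t < length w \<and> d (w ! s) \<le> v \<and> v < d (w ! t)"
  proof (cases "i < j")
    case True then show ?thesis using ij xy by blast
  next
    case False
    show ?thesis
    proof (cases "0 \<le> v")
      case True
      then have "0 < j" using ends ij xy by (cases j) auto
      then show ?thesis using ends ij xy True by (intro exI[of _ 0] exI[of _ j]) auto
    next
      case False
      then have "i < length w - 1" using ends ij xy by (cases "i = length w - 1") auto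
      then show ?thesis using ends ij xy False by (intro exI[of _ i] exI[of _ "length w - 1"]) auto
    qed
  qed
  then obtain s t where "s < t" "t < length w" "d (w ! s) \<le> v" "v < d (w ! t)" by blast
  then obtain r where "r < t" "d (w ! r) = v" "d (w ! Suc r) = v + 1" "w ! r < w ! Suc r"
    using admissible_ascent_between[OF w] by blast
  with \<open>t < length w\<close> show ?thesis
    by (intro bexI[of _ "w ! Suc r"] bexI[of _ "w ! r"]) auto
qed

lemma word_dinv_eq_card:
  "distinct w \<Longrightarrow>
   word_dinv D w = card {(a, b). a \<in> set w \<and> b \<in> set w \<and> position w a < position w b \<and> dinv_pair D a b}"
proof (induction w)
  case (Cons x xs)
  let ?P = "\<lambda>xs. {(a, b). a \<in> set xs \<and> b \<in> set xs \<and> position xs a < position xs b \<and> dinv_pair D a b}"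
  have "?P (x # xs) = Pair x ` {b \<in> set xs. dinv_pair D x b} \<union> ?P xs"
    using Cons.prems by (auto split: if_splits)
  moreover have "card (Pair x ` {b \<in> set xs. dinv_pair D x b} \<union> ?P xs)
      = card (Pair x ` {b \<in> set xs. dinv_pair D x b}) + card (?P xs)"
    using Cons.prems by (intro card_Un_disjoint) (auto intro: finite_subset[of _ "set xs \<times> set xs"])
  moreover have "card (Pair x ` {b \<in> set xs. dinv_pair D x b}) = length (filter (dinv_pair D x) xs)"
    using Cons.prems
    by (subst card_image) (auto simp: inj_on_def distinct_length_filter intro!: arg_cong[where f=card])
  ultimately show ?case using Cons by simp
qed simp

section \<open>Inserting one car\<close>

lemma qint_0 [simp]: "qint 0 q = 0"
  by (simp add: qint_def)

lemma qint_Suc: "qint (Suc m) q = qint m q + q ^ m"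
  by (simp add: qint_def)

lemma sum_pow_count_after:
  "(\<Sum>i<length xs. if xs ! i \<in> S then q ^ length (filter (\<lambda>x. x \<in> S) (drop (Suc i) xs)) else 0)
   = qint (length (filter (\<lambda>x. x \<in> S) xs)) (q::'a::comm_semiring_1)"
proof (induction xs)
  case (Cons z ys)
  let ?g = "\<lambda>i. if (z # ys) ! i \<in> S then q ^ length (filter (\<lambda>x. x \<in> S) (drop (Suc i) (z # ys))) else 0"
  have "(\<Sum>i<length (z # ys). ?g i) = ?g 0 + (\<Sum>i<length ys. ?g (Suc i))"
    by (simp only: length_Cons sum.lessThan_Suc_shift)
  then show ?case
    using Cons.IH by (simp add: qint_Suc algebra_simps cong: if_cong)
qed simp

lemma sum_pow_count_before:
  "(\<Sum>i<length xs. if xs ! i \<in> S then q ^ length (filter (\<lambda>x. x \<in> S) (take i xs)) else 0)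
   = qint (length (filter (\<lambda>x. x \<in> S) xs)) (q::'a::comm_semiring_1)"
proof (induction xs rule: rev_induct)
  case (snoc z ys)
  have "(\<Sum>i<length ys. if (ys @ [z]) ! i \<in> S then q ^ length (filter (\<lambda>x. x \<in> S) (take i (ys @ [z]))) else 0)
     = (\<Sum>i<length ys. if ys ! i \<in> S then q ^ length (filter (\<lambda>x. x \<in> S) (take i ys)) else 0)"
    by (intro sum.cong) (auto simp: nth_append)
  then show ?case by (simp add: snoc qint_Suc algebra_simps)
qed simp

lemma insert_at_eq_iff:
  assumes "c \<notin> set w1" "c \<notin> set w2" "p1 \<le> length w1" "p2 \<le> length w2"
  shows "take p1 w1 @ c # drop p1 w1 = take p2 w2 @ c # drop p2 w2 \<longleftrightarrow> w1 = w2 \<and> p1 = p2"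
proof
  assume e: "take p1 w1 @ c # drop p1 w1 = take p2 w2 @ c # drop p2 w2"
  have "c \<notin> set (take p1 w1)" "c \<notin> set (drop p1 w1)"
    using assms(1) by (auto dest: in_set_takeD in_set_dropD)
  from append_Cons_eq_iff[OF this] e
  have "take p1 w1 = take p2 w2" "drop p1 w1 = drop p2 w2" by auto
  moreover from this have "w1 = w2" by (metis append_take_drop_id)
  ultimately show "w1 = w2 \<and> p1 = p2" using assms(3,4) by (metis length_take min.absorb2)
qed simp

lemma bij_betw_insert_at:
  assumes cA: "c \<in> A"
    and ins: "\<And>u v. u @ v \<in> admissible_words d (A - {c}) \<Longrightarrow> fits u v \<Longrightarrow> admissible d (u @ c # v)"
    and del: "\<And>u v. u @ c # v \<in> admissible_words d A \<Longrightarrow> admissible d (u @ v) \<and> fits u v"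
  shows "bij_betw (\<lambda>(w, p). take p w @ c # drop p w)
           (SIGMA w:admissible_words d (A - {c}). {p. p \<le> length w \<and> fits (take p w) (drop p w)})
           (admissible_words d A)"
  (is "bij_betw ?ins (SIGMA w:?W. ?P w) _")
  unfolding bij_betw_def
proof (intro conjI equalityI subsetI)
  show "inj_on ?ins (SIGMA w:?W. ?P w)"
  proof (rule inj_onI)
    fix x y assume "x \<in> (SIGMA w:?W. ?P w)" "y \<in> (SIGMA w:?W. ?P w)" "?ins x = ?ins y"
    then show "x = y" by (cases x; cases y) (simp add: admissible_words_def insert_at_eq_iff)
  qed
next
  fix w assume "w \<in> ?ins ` (SIGMA w:?W. ?P w)"
  then obtain w' p where h: "w' \<in> ?W" "p \<in> ?P w'" and w: "w = take p w' @ c # drop p w'"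
    by auto
  have "take p w' @ drop p w' \<in> ?W" using h(1) by simp
  then have "admissible d w" using ins h(2) w by simp
  moreover have "distinct (take p w' @ drop p w')" "set (take p w' @ drop p w') = A - {c}"
    using h(1) by (simp_all add: admissible_words_def)
  then have "distinct w" "set w = A"
    using cA unfolding w set_append distinct_append by (auto simp del: append_take_drop_id)
  ultimately show "w \<in> admissible_words d A" by (simp add: admissible_words_def)
next
  fix w assume w: "w \<in> admissible_words d A"
  then have "c \<in> set w" using cA by (simp add: admissible_words_def)
  then obtain u v where uv: "w = u @ c # v" by (meson split_list)
  have "u @ v \<in> ?W" "length u \<in> ?P (u @ v)"
    using del[of u v] w uv by (auto simp: admissible_words_def)
  moreover have "w = ?ins (u @ v, length u)" using uv by simp
  ultimately show "w \<in> ?ins ` (SIGMA w:?W. ?P w)" by blast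
qed

lemma dinv_gf_insert:
  fixes q :: "'a::comm_ring_1"
  assumes fin: "finite A" and cA: "c \<in> A"
    and ins: "\<And>u v. u @ v \<in> admissible_words d (A - {c}) \<Longrightarrow> fits u v \<Longrightarrow> admissible d (u @ c # v)"
    and del: "\<And>u v. u @ c # v \<in> admissible_words d A \<Longrightarrow> admissible d (u @ v) \<and> fits u v"
    and gain: "\<And>w. w \<in> admissible_words d (A - {c}) \<Longrightarrow>
      (\<Sum>p | p \<le> length w \<and> fits (take p w) (drop p w). q ^ word_dinv d (take p w @ c # drop p w))
        = q ^ word_dinv d w * Q"
  shows "dinv_gf d A q = Q * dinv_gf d (A - {c}) q"
proof -
  let ?W = "admissible_words d (A - {c})" and ?P = "\<lambda>w. {p. p \<le> length w \<and> fits (take p w) (drop p w)}"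
  have "dinv_gf d A q
      = (\<Sum>x\<in>(SIGMA w:?W. ?P w). q ^ word_dinv d ((\<lambda>(w, p). take p w @ c # drop p w) x))"
    unfolding dinv_gf_def by (rule sum.reindex_bij_betw[OF bij_betw_insert_at[OF cA ins del], symmetric])
  also have "\<dots> = (\<Sum>w\<in>?W. \<Sum>p\<in>?P w. q ^ word_dinv d (take p w @ c # drop p w))"
    by (subst sum.Sigma) (auto simp: fin finite_admissible_words split_beta)
  also have "\<dots> = Q * dinv_gf d (A - {c}) q"
    by (simp add: gain dinv_gf_def sum_distrib_left mult.commute)
  finally show ?thesis .
qed

text \<open>The car \<open>c\<close> can only be placed directly after a car of \<open>slots\<close>, or at the very beginning
  if \<open>d c = 0\<close>; the placement raises the dinv statistic by the number of cars of \<open>slots\<close> after it.\<close>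
locale top_insertion =
  fixes d :: "nat \<Rightarrow> int" and A :: "nat set" and c :: nat
  assumes finite_A: "finite A" and c_in: "c \<in> A"
    and top: "\<And>x. x \<in> A \<Longrightarrow> d x \<le> d c"
    and nonneg: "\<And>x. x \<in> A \<Longrightarrow> 0 \<le> d x"
    and c_least: "\<And>x. x \<in> A \<Longrightarrow> d x = d c \<Longrightarrow> c \<le> x"
begin

definition slots :: "nat set" where
  "slots = {x\<in>A. (d x = d c \<and> x \<noteq> c) \<or> (d x = d c - 1 \<and> x < c)}"

definition fits :: "nat list \<Rightarrow> nat list \<Rightarrow> bool" where
  "fits u v \<longleftrightarrow> (if u = [] then d c = 0 else last u \<in> slots)"

lemma admissible_insert:
  assumes w: "u @ v \<in> admissible_words d (A - {c})" and fit: "fits u v"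
  shows "admissible d (u @ c # v)"
  unfolding admissible_insert_iff
proof (intro conjI impI)
  have uv: "admissible d (u @ v)" "set u \<subseteq> A" "set v \<subseteq> A"
    using w by (auto simp: admissible_words_def)
  then show "successively (diag_step d) u" "successively (diag_step d) v"
    by (auto simp: admissible_append_iff)
  show "diag_step d (last u) c" if "u \<noteq> []"
    using fit that by (auto simp: fits_def slots_def diag_step_def)
  show "diag_step d c (hd v)" if "v \<noteq> []"
    using top[of "hd v"] uv(3) hd_in_set[OF that] by (auto simp: diag_step_def)
  show "d (hd (u @ [c])) \<le> 0"
    using fit uv(1) by (cases "u = []") (auto simp: fits_def admissible_append_iff)
  show "0 \<le> d (last (c # v))"
    using nonneg c_in uv(3) by (cases "v = []") (auto dest: last_in_set)
qed

lemma admissible_delete: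
  assumes w: "u @ c # v \<in> admissible_words d A"
  shows "admissible d (u @ v) \<and> fits u v"
proof -
  have g: "successively (diag_step d) u" "successively (diag_step d) v"
    "u \<noteq> [] \<Longrightarrow> diag_step d (last u) c" "v \<noteq> [] \<Longrightarrow> diag_step d c (hd v)"
    "d (hd (u @ [c])) \<le> 0"
    using w by (auto simp: admissible_words_def admissible_insert_iff)
  have A: "set u \<subseteq> A" "set v \<subseteq> A" "u \<noteq> [] \<Longrightarrow> last u \<noteq> c"
    using w by (auto simp: admissible_words_def)
  have "admissible d (u @ v)"
    unfolding admissible_append_iff
  proof (intro conjI impI)
    show "diag_step d (last u) (hd v)" if "u \<noteq> []" "v \<noteq> []"
      using g(3)[OF that(1)] g(4)[OF that(2)] top[of "hd v"] c_least[of "hd v"] A that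
      by (force simp: diag_step_def)
    show "d (hd (u @ v)) \<le> 0" if "u @ v \<noteq> []"
      using that g(5) top[of "hd v"] A by (cases "u = []") (auto dest: hd_in_set)
    show "0 \<le> d (last (u @ v))" if "u @ v \<noteq> []"
      using nonneg[of "last (u @ v)"] last_in_set[OF that] A by auto
  qed (use g in auto)
  moreover have "fits u v"
  proof (cases "u = []")
    case True
    then show ?thesis using g(5) nonneg c_in by (force simp: fits_def)
  next
    case False
    then have "last u \<in> A" using A by auto
    then show ?thesis
      using False g(3) top[of "last u"] A(3) by (auto simp: fits_def slots_def diag_step_def)
  qed
  ultimately show ?thesis ..
qed

lemma word_dinv_insert_top:
  assumes "w \<in> admissible_words d (A - {c})"
  shows "word_dinv d (take p w @ c # drop p w) = word_dinv d w + length (filter (\<lambda>x. x \<in> slots) (drop p w))"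
proof -
  have "set w = A - {c}" using assms by (simp add: admissible_words_def)
  then have "filter (dinv_pair d c) (drop p w) = filter (\<lambda>x. x \<in> slots) (drop p w)"
    and "filter (\<lambda>x. dinv_pair d x c) (take p w) = []"
    using c_least top
    by (auto intro!: filter_cong simp: dinv_pair_def slots_def filter_empty_conv
        dest!: in_set_dropD in_set_takeD) force+
  then show ?thesis by (simp add: word_dinv_insert)
qed

lemma sum_insert_top:
  fixes q :: "'a::comm_ring_1"
  assumes w: "w \<in> admissible_words d (A - {c})"
  shows "(\<Sum>p | p \<le> length w \<and> fits (take p w) (drop p w). q ^ word_dinv d (take p w @ c # drop p w))
    = q ^ word_dinv d w * qint (card slots + (if d c = 0 then 1 else 0)) q"
proof -
  have count: "length (filter (\<lambda>x. x \<in> slots) w) = card slots"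
    using w by (subst distinct_length_filter)
      (auto simp: admissible_words_def slots_def intro!: arg_cong[where f=card])
  have "fits (take p w) (drop p w) \<longleftrightarrow> (p = 0 \<and> d c = 0) \<or> (0 < p \<and> w ! (p - 1) \<in> slots)"
    if "p \<le> length w" for p
    using that by (cases p) (auto simp: fits_def take_Suc_conv_app_nth)
  then have P: "{p. p \<le> length w \<and> fits (take p w) (drop p w)}
      = (if d c = 0 then {0} else {}) \<union> Suc ` {i \<in> {..<length w}. w ! i \<in> slots}"
    by (force simp: image_iff gr0_conv_Suc Suc_le_eq)
  have "(\<Sum>p | p \<le> length w \<and> fits (take p w) (drop p w). q ^ length (filter (\<lambda>x. x \<in> slots) (drop p w)))
      = (if d c = 0 then q ^ card slots else 0)
        + (\<Sum>i\<in>{i \<in> {..<length w}. w ! i \<in> slots}. q ^ length (filter (\<lambda>x. x \<in> slots) (drop (Suc i) w)))"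
    unfolding P by (subst sum.union_disjoint) (auto simp: sum.reindex count)
  also have "\<dots> = qint (card slots + (if d c = 0 then 1 else 0)) q"
    by (subst sum.inter_filter) (auto simp: sum_pow_count_after count qint_Suc)
  finally show ?thesis
    by (simp add: word_dinv_insert_top[OF w] power_add sum_distrib_left[symmetric])
qed

lemma dinv_gf_eq:
  "dinv_gf d A q = qint (card slots + (if d c = 0 then 1 else 0)) q * dinv_gf d (A - {c}) q"
  by (rule dinv_gf_insert[OF finite_A c_in admissible_insert admissible_delete sum_insert_top])

end

text \<open>The car \<open>c\<close> can only be placed directly before a car of \<open>slots\<close>; the placement raises the dinv
  statistic by the number of cars of \<open>slots\<close> before it.\<close>
locale bottom_insertion =
  fixes d :: "nat \<Rightarrow> int" and A :: "nat set" and c :: nat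
  assumes finite_A: "finite A" and c_in: "c \<in> A"
    and bottom: "\<And>x. x \<in> A \<Longrightarrow> d c \<le> d x"
    and negative: "d c < 0"
    and c_greatest: "\<And>x. x \<in> A \<Longrightarrow> d x = d c \<Longrightarrow> x \<le> c"
begin

definition slots :: "nat set" where
  "slots = {x\<in>A. (d x = d c \<and> x \<noteq> c) \<or> (d x = d c + 1 \<and> c < x)}"

definition fits :: "nat list \<Rightarrow> nat list \<Rightarrow> bool" where
  "fits u v \<longleftrightarrow> v \<noteq> [] \<and> hd v \<in> slots"

lemma admissible_insert:
  assumes w: "u @ v \<in> admissible_words d (A - {c})" and fit: "fits u v"
  shows "admissible d (u @ c # v)"
  unfolding admissible_insert_iff
proof (intro conjI impI)
  have uv: "admissible d (u @ v)" "set u \<subseteq> A" "v \<noteq> []"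
    using w fit by (auto simp: admissible_words_def fits_def)
  then show "successively (diag_step d) u" "successively (diag_step d) v"
    by (auto simp: admissible_append_iff)
  show "diag_step d (last u) c" if "u \<noteq> []"
    using bottom[of "last u"] uv(2) last_in_set[OF that] by (force simp: diag_step_def)
  show "diag_step d c (hd v)"
    using fit by (auto simp: fits_def slots_def diag_step_def)
  show "d (hd (u @ [c])) \<le> 0"
    using negative uv(1) by (cases "u = []") (auto simp: admissible_append_iff)
  show "0 \<le> d (last (c # v))"
    using uv by (auto simp: admissible_append_iff)
qed

lemma admissible_delete:
  assumes w: "u @ c # v \<in> admissible_words d A"
  shows "admissible d (u @ v) \<and> fits u v"
proof -
  have g: "successively (diag_step d) u" "successively (diag_step d) v"
    "u \<noteq> [] \<Longrightarrow> diag_step d (last u) c" "v \<noteq> [] \<Longrightarrow> diag_step d c (hd v)"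
    "d (hd (u @ [c])) \<le> 0" "0 \<le> d (last (c # v))"
    using w by (auto simp: admissible_words_def admissible_insert_iff)
  have A: "set u \<subseteq> A" "set v \<subseteq> A" "u \<noteq> [] \<Longrightarrow> last u \<noteq> c" "v \<noteq> [] \<Longrightarrow> hd v \<noteq> c"
    using w by (auto simp: admissible_words_def)
  have v: "v \<noteq> []" "hd v \<in> A" using g(6) negative A(2) by (cases v; auto)+
  have "admissible d (u @ v)"
    unfolding admissible_append_iff
  proof (intro conjI impI)
    show "diag_step d (last u) (hd v)" if "u \<noteq> []"
      using g(3)[OF that] g(4)[OF v(1)] bottom[of "last u"] c_greatest[of "last u"] A(1,3) v(2)
        last_in_set[OF that] that by (force simp: diag_step_def)
    show "d (hd (u @ v)) \<le> 0"
      using g(4)[OF v(1)] g(5) negative by (cases "u = []") (auto simp: diag_step_def)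
    show "0 \<le> d (last (u @ v))" using g(6) v by simp
  qed (use g in auto)
  moreover have "fits u v"
    using g(4)[OF v(1)] A(4)[OF v(1)] v bottom[of "hd v"] by (force simp: fits_def slots_def diag_step_def)
  ultimately show ?thesis ..
qed

lemma word_dinv_insert_bottom:
  assumes "w \<in> admissible_words d (A - {c})"
  shows "word_dinv d (take p w @ c # drop p w) = word_dinv d w + length (filter (\<lambda>x. x \<in> slots) (take p w))"
proof -
  have "set w = A - {c}" using assms by (simp add: admissible_words_def)
  then have "filter (\<lambda>x. dinv_pair d x c) (take p w) = filter (\<lambda>x. x \<in> slots) (take p w)"
    and "filter (dinv_pair d c) (drop p w) = []"
    using c_greatest bottom
    by (auto intro!: filter_cong simp: dinv_pair_def slots_def filter_empty_conv
        dest!: in_set_dropD in_set_takeD) force+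
  then show ?thesis by (simp add: word_dinv_insert)
qed

lemma sum_insert_bottom:
  fixes q :: "'a::comm_ring_1"
  assumes w: "w \<in> admissible_words d (A - {c})"
  shows "(\<Sum>p | p \<le> length w \<and> fits (take p w) (drop p w). q ^ word_dinv d (take p w @ c # drop p w))
    = q ^ word_dinv d w * qint (card slots) q"
proof -
  have count: "length (filter (\<lambda>x. x \<in> slots) w) = card slots"
    using w by (subst distinct_length_filter)
      (auto simp: admissible_words_def slots_def intro!: arg_cong[where f=card])
  have P: "{p. p \<le> length w \<and> fits (take p w) (drop p w)} = {i \<in> {..<length w}. w ! i \<in> slots}"
    by (auto simp: fits_def hd_drop_conv_nth)
  have "(\<Sum>p | p \<le> length w \<and> fits (take p w) (drop p w). q ^ length (filter (\<lambda>x. x \<in> slots) (take p w)))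
      = qint (card slots) q"
    unfolding P by (subst sum.inter_filter) (auto simp: sum_pow_count_before count)
  then show ?thesis
    by (simp add: word_dinv_insert_bottom[OF w] power_add sum_distrib_left[symmetric])
qed

lemma dinv_gf_eq: "dinv_gf d A q = qint (card slots) q * dinv_gf d (A - {c}) q"
  by (rule dinv_gf_insert[OF finite_A c_in admissible_insert admissible_delete sum_insert_bottom])

end

section \<open>Preference functions and their reading words\<close>

lemma car_row_eq_card_lex: "car_row n f i = card {c \<in> {1..n}. (f c, c) < (f i, i)}"
  unfolding car_row_def by (intro arg_cong[where f=card]) auto

text \<open>It is \<open>undefined\<close> outside
  \<open>{1..n}\<close>, as the extensional functions in \<open>pref_fns\<close> are.\<close>
definition pref_of_word :: "(nat \<Rightarrow> int) \<Rightarrow> nat \<Rightarrow> nat list \<Rightarrow> nat \<Rightarrow> nat" where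
  "pref_of_word d n w = (\<lambda>c. if c \<in> {1..n} then nat (int (position w c) - d c) + 1 else undefined)"

lemma pref_of_word_cong:
  "(\<And>c. c \<in> {1..n} \<Longrightarrow> d c = d' c) \<Longrightarrow> pref_of_word d n w = pref_of_word d' n w"
  unfolding pref_of_word_def by auto

definition reading_word :: "nat \<Rightarrow> (nat \<Rightarrow> nat) \<Rightarrow> nat list" where
  "reading_word n f = sort_key (\<lambda>c. (f c, c)) [1..<n+1]"

lemma distinct_reading_word: "distinct (reading_word n f)"
  and set_reading_word: "set (reading_word n f) = {1..n}"
  and length_reading_word: "length (reading_word n f) = n"
  by (auto simp: reading_word_def)

lemma sorted_reading_word: "sorted_wrt (\<lambda>a b. (f a, a) < (f b, b)) (reading_word n f)"
proof -
  have "sorted_wrt (<) (map (\<lambda>c. (f c, c)) (reading_word n f))"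
    using distinct_reading_word
    by (auto simp: strict_sorted_iff reading_word_def distinct_map inj_on_def)
  then show ?thesis by (simp add: sorted_wrt_map)
qed

lemma car_diag_reading_word_nth:
  "r < n \<Longrightarrow> car_diag n f (reading_word n f ! r) = int r - int (f (reading_word n f ! r)) + 1"
  using card_key_less_nth[OF sorted_reading_word, of r]
  by (simp add: car_diag_def car_row_eq_card_lex set_reading_word length_reading_word)

context
  fixes d :: "nat \<Rightarrow> int" and n :: nat and w :: "nat list"
  assumes adm: "admissible d w" and dist: "distinct w" and set_w: "set w = {1..n}"
begin

lemma length_w: "length w = n"
  using dist set_w distinct_card by fastforce

lemma pref_of_word_eq:
  assumes c: "c \<in> {1..n}"
  shows "int (pref_of_word d n w c) = int (position w c) - d c + 1"
proof -
  have "position w c < length w" "w ! position w c = c" using position_nth c set_w by auto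
  then have "d c \<le> int (position w c)" using admissible_diag_le[OF adm] by metis
  then show ?thesis using c by (simp add: pref_of_word_def)
qed

lemma pref_of_word_nth:
  "r < n \<Longrightarrow> int (pref_of_word d n w (w ! r)) = int r - d (w ! r) + 1"
  using pref_of_word_eq[of "w ! r"] position_of_nth[OF dist] set_w length_w nth_mem by fastforce

lemma pref_of_word_in_pref_fns: "pref_of_word d n w \<in> pref_fns n"
  unfolding pref_fns_def
proof (rule PiE_I)
  fix c assume "c \<in> {1..n}"
  then obtain r where r: "r < n" "w ! r = c" using set_w length_w by (metis in_set_conv_nth)
  then have "int r + 1 - int n \<le> d (w ! r)" "d (w ! r) \<le> int r"
    using admissible_diag_ge[OF adm] admissible_diag_le[OF adm] length_w by auto
  then show "pref_of_word d n w c \<in> {1..n}" using pref_of_word_nth[OF r(1)] r by auto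
qed (auto simp: pref_of_word_def)

lemma sorted_pref_of_word:
  "sorted_wrt (\<lambda>a b. (pref_of_word d n w a, a) < (pref_of_word d n w b, b)) w"
proof (subst sorted_wrt_iff_nth_Suc_transp)
  show "transp (\<lambda>a b. (pref_of_word d n w a, a) < (pref_of_word d n w b, b))"
    by (auto simp: transp_def)
  show "\<forall>i. Suc i < length w \<longrightarrow>
     (pref_of_word d n w (w ! i), w ! i) < (pref_of_word d n w (w ! Suc i), w ! Suc i)"
  proof (intro allI impI)
    fix i assume i: "Suc i < length w"
    have "int (pref_of_word d n w (w ! i)) = int i - d (w ! i) + 1"
      "int (pref_of_word d n w (w ! Suc i)) = int i - d (w ! Suc i) + 2"
      using pref_of_word_nth[of i] pref_of_word_nth[of "Suc i"] i length_w by auto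
    then show "(pref_of_word d n w (w ! i), w ! i) < (pref_of_word d n w (w ! Suc i), w ! Suc i)"
      using admissible_step_nth[OF adm i] by (auto simp: diag_step_def less_prod_def)
  qed
qed

lemma car_row_pref_of_word: "c \<in> {1..n} \<Longrightarrow> car_row n (pref_of_word d n w) c = position w c"
  using card_key_less_nth[OF sorted_pref_of_word, of "position w c"] position_nth[of c w] set_w
  by (simp add: car_row_eq_card_lex)

lemma car_diag_pref_of_word: "c \<in> {1..n} \<Longrightarrow> car_diag n (pref_of_word d n w) c = d c"
  using pref_of_word_eq car_row_pref_of_word by (simp add: car_diag_def)

lemma deviation_pref_of_word: "deviation n (pref_of_word d n w) = Max ((\<lambda>c. - d c) ` {1..n})"
proof -
  have "(\<lambda>c. - car_diag n (pref_of_word d n w) c) ` {1..n} = (\<lambda>c. - d c) ` {1..n}"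
    by (intro image_cong) (simp_all add: car_diag_pref_of_word)
  then show ?thesis by (simp add: deviation_def)
qed

lemma tertiary_dinv_pref_of_word: "tertiary_dinv n (pref_of_word d n w) = card {c \<in> {1..n}. d c < 0}"
  unfolding tertiary_dinv_def using car_diag_pref_of_word
  by (intro arg_cong[where f=card]) auto

lemma area_pref_of_word:
  "area n (pref_of_word d n w) = (\<Sum>c\<in>{1..n}. d c + Max ((\<lambda>c. - d c) ` {1..n}))"
  unfolding area_def deviation_pref_of_word using car_diag_pref_of_word
  by (intro sum.cong) auto

lemma reading_word_pref_of_word: "reading_word n (pref_of_word d n w) = w"
  unfolding reading_word_def
proof (rule sort_key_inj_key_eq)
  show "mset [1..<n + 1] = mset w"
    using dist set_w set_eq_iff_mset_eq_distinct[of "[1..<n+1]" w] by auto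
  show "sorted (map (\<lambda>c. (pref_of_word d n w c, c)) w)"
    using sorted_pref_of_word
    by (auto simp: sorted_map elim!: sorted_wrt_mono_rel[rotated])
qed (auto simp: inj_on_def)

text \<open>A pair of cars of the same diagonal, or in adjacent diagonals, is counted by primary or
  secondary dinv exactly when it forms a \<open>dinv_pair\<close> read in the order of \<open>w\<close>.\<close>
lemma primary_secondary_dinv_pref_of_word:
  "primary_dinv n (pref_of_word d n w) + secondary_dinv n (pref_of_word d n w) = word_dinv d w"
proof -
  let ?F = "pref_of_word d n w"
  define P where "P = {(a, b). a \<in> {1..n} \<and> b \<in> {1..n} \<and> car_diag n ?F a = car_diag n ?F b \<and> ?F a < ?F b \<and> a < b}"
  define S where "S = {(a, b). a \<in> {1..n} \<and> b \<in> {1..n} \<and> b < a \<and> car_diag n ?F a = car_diag n ?F b + 1 \<and> ?F a < ?F b}"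
  have pair: "(a, b) \<in> P \<union> S \<longleftrightarrow> position w a < position w b \<and> dinv_pair d a b"
    if ab: "a \<in> {1..n}" "b \<in> {1..n}" for a b
  proof -
    have "position w a \<noteq> position w b" if "a \<noteq> b"
      using position_nth[of a w] position_nth[of b w] ab set_w that by metis
    moreover have "?F a < ?F b \<longleftrightarrow> int (position w a) - d a < int (position w b) - d b"
      using pref_of_word_eq ab by (metis add_less_cancel_right of_nat_less_iff)
    ultimately show ?thesis
      using car_diag_pref_of_word ab
      by (auto simp: P_def S_def dinv_pair_def)
  qed
  have "P \<union> S = {(a, b). a \<in> set w \<and> b \<in> set w \<and> position w a < position w b \<and> dinv_pair d a b}"
    using pair set_w by (auto simp: P_def S_def)
  moreover have "card (P \<union> S) = card P + card S"
    by (rule card_Un_disjoint) (auto simp: P_def S_def intro: finite_subset[of _ "{1..n} \<times> {1..n}"])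
  ultimately show ?thesis
    using word_dinv_eq_card[OF dist, of d] by (simp add: primary_dinv_def secondary_dinv_def P_def S_def)
qed

end

context
  fixes f :: "nat \<Rightarrow> nat" and n :: nat
  assumes f: "f \<in> pref_fns n"
begin

lemma admissible_reading_word: "admissible (car_diag n f) (reading_word n f)"
proof -
  let ?w = "reading_word n f"
  have step: "diag_step (car_diag n f) (?w ! i) (?w ! Suc i)" if i: "Suc i < n" for i
  proof -
    have "(f (?w ! i), ?w ! i) < (f (?w ! Suc i), ?w ! Suc i)"
      using sorted_wrt_nth_less[OF sorted_reading_word, of i "Suc i"] i by (simp add: length_reading_word)
    then show ?thesis
      using car_diag_reading_word_nth[of i] car_diag_reading_word_nth[of "Suc i"] i
      by (auto simp: diag_step_def)
  qed
  have column: "f (?w ! r) \<in> {1..n}" if "r < n" for r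
    using f nth_mem[of r ?w] that by (auto simp: pref_fns_def set_reading_word length_reading_word)
  have "car_diag n f (?w ! 0) \<le> 0" "0 \<le> car_diag n f (?w ! (n - 1))" if "0 < n"
    using car_diag_reading_word_nth[where n=n and f=f and r=0] column[of 0]
      car_diag_reading_word_nth[where n=n and f=f and r="n - 1"] column[of "n - 1"] that
    by auto
  then show ?thesis
    using step length_reading_word[of n f]
    by (auto simp: admissible_def successively_conv_nth hd_conv_nth last_conv_nth)
qed

lemma pref_of_reading_word: "pref_of_word (car_diag n f) n (reading_word n f) = f"
proof
  fix c
  show "pref_of_word (car_diag n f) n (reading_word n f) c = f c"
  proof (cases "c \<in> {1..n}")
    case True
    then have p: "position (reading_word n f) c < n" "reading_word n f ! position (reading_word n f) c = c"
      using position_nth[of c "reading_word n f"] by (auto simp: set_reading_word length_reading_word)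
    have "f c \<in> {1..n}" using f True by (auto simp: pref_fns_def)
    then show ?thesis
      using car_diag_reading_word_nth[OF p(1), where f=f] p(2) True
      by (simp add: pref_of_word_def Suc_nat_eq_nat_zadd1)
  next
    case False then show ?thesis using f by (auto simp: pref_of_word_def pref_fns_def)
  qed
qed

end

definition diag_levels :: "(nat \<Rightarrow> int) \<Rightarrow> nat set \<Rightarrow> nat list list" where
  "diag_levels D A = map (\<lambda>i. sorted_list_of_set {c\<in>A. D c = Max (D ` A) - int i})
                         [0..<nat (Max (D ` A) - Min (D ` A)) + 1]"

context
  fixes D :: "nat \<Rightarrow> int" and A :: "nat set"
  assumes fin: "finite A" and ne: "A \<noteq> {}"
begin

lemma diag_levels_level:
  assumes "c \<in> A"
  shows "nat (Max (D ` A) - D c) < length (diag_levels D A)"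
    and "c \<in> set (diag_levels D A ! nat (Max (D ` A) - D c))"
proof -
  let ?i = "nat (Max (D ` A) - D c)"
  have le: "D c \<le> Max (D ` A)" "Min (D ` A) \<le> D c" using assms fin by auto
  then show i: "?i < length (diag_levels D A)"
    unfolding diag_levels_def length_map length_upt by linarith
  have "int ?i = Max (D ` A) - D c" using le by linarith
  then show "c \<in> set (diag_levels D A ! ?i)"
    using i assms fin by (simp add: diag_levels_def del: upt_Suc)
qed

lemma set_diag_levels_nth:
  "i < length (diag_levels D A) \<Longrightarrow> set (diag_levels D A ! i) = {c\<in>A. D c = Max (D ` A) - int i}"
  using fin by (simp add: diag_levels_def del: upt_Suc)

lemma sort_key_diag_eq_concat_levels:
  assumes xs: "distinct xs" "set xs = A"
  shows "sort_key (\<lambda>c. (- D c, c)) xs = concat (diag_levels D A)"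
proof (rule sort_key_inj_key_eq)
  let ?hi = "Max (D ` A)" and ?Bs = "diag_levels D A"
  have set_Bs: "set (concat ?Bs) = A"
    using diag_levels_level set_diag_levels_nth by (fastforce simp: in_set_conv_nth)
  have "sorted_wrt (\<lambda>a b. nat (?hi - D a) < nat (?hi - D b) \<or> (nat (?hi - D a) = nat (?hi - D b) \<and> a < b))
          (concat ?Bs)"
    by (rule sorted_wrt_concat_blocks[where m=0])
       (auto simp: diag_levels_def fin simp del: upt_Suc)
  then have "sorted_wrt (\<lambda>a b. (- D a, a) < (- D b, b)) (concat ?Bs)"
  proof (rule sorted_wrt_mono_rel[rotated])
    fix a b assume "a \<in> set (concat ?Bs)" "b \<in> set (concat ?Bs)"
      and "nat (?hi - D a) < nat (?hi - D b) \<or> (nat (?hi - D a) = nat (?hi - D b) \<and> a < b)"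
    moreover from this have "D a \<le> ?hi" "D b \<le> ?hi" using set_Bs fin by (auto intro: Max_ge)
    ultimately show "(- D a, a) < (- D b, b)" by (auto simp: less_prod_def)
  qed
  then have "sorted_wrt (<) (map (\<lambda>c. (- D c, c)) (concat ?Bs))"
    by (simp only: sorted_wrt_map)
  then have "sorted (map (\<lambda>c. (- D c, c)) (concat ?Bs))" "distinct (concat ?Bs)"
    by (auto simp: strict_sorted_iff distinct_map)
  then show "mset xs = mset (concat ?Bs)" "sorted (map (\<lambda>c. (- D c, c)) (concat ?Bs))"
    using xs set_Bs set_eq_iff_mset_eq_distinct[of xs "concat ?Bs"] by auto
qed (auto simp: inj_on_def)

lemma runs_concat_diag_levels:
  assumes cross: "\<And>v. Min (D ` A) \<le> v \<Longrightarrow> v < Max (D ` A) \<Longrightarrow>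
                        \<exists>a\<in>A. \<exists>b\<in>A. D a = v + 1 \<and> D b = v \<and> b < a"
  shows "runs (concat (diag_levels D A)) = diag_levels D A"
proof (rule runs_concat)
  let ?hi = "Max (D ` A)" and ?lo = "Min (D ` A)" and ?Bs = "diag_levels D A"
  have "?lo \<le> ?hi"
  proof -
    obtain c where "c \<in> A" using ne by blast
    then show ?thesis using fin by (meson Max_ge Min_le finite_imageI imageI order.trans)
  qed
  then have range: "?lo \<le> ?hi - int i" "?hi - int i \<le> ?hi" if "i < length ?Bs" for i
    using that by (auto simp: diag_levels_def simp del: upt_Suc)
  have "?Bs ! i \<noteq> []" if i: "i < length ?Bs" for i
  proof (cases "i = 0")
    case True
    have "?hi \<in> D ` A" using fin ne by simp
    then show ?thesis using set_diag_levels_nth[OF i] True by force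
  next
    case False
    then show ?thesis using set_diag_levels_nth[OF i] range[OF i] cross[of "?hi - int i"] by force
  qed
  then show "\<forall>b\<in>set ?Bs. b \<noteq> [] \<and> sorted_wrt (<) b"
    by (auto simp: in_set_conv_nth diag_levels_def simp del: upt_Suc)
  show "successively (\<lambda>a b. \<exists>x\<in>set a. \<exists>y\<in>set b. y < x) ?Bs"
    unfolding successively_conv_nth
  proof (intro allI impI)
    fix i assume i: "Suc i < length ?Bs"
    then obtain a b where "a \<in> A" "b \<in> A" "D a = ?hi - int i" "D b = ?hi - int (Suc i)" "b < a"
      using cross[of "?hi - int i - 1"] range[OF i] by auto
    then show "\<exists>x\<in>set (?Bs ! i). \<exists>y\<in>set (?Bs ! Suc i). y < x"
      using i set_diag_levels_nth[of i] set_diag_levels_nth[of "Suc i"] by auto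
  qed
qed

end

section \<open>The preference functions with given diagword and deviation\<close>

locale perm_with_runs =
  fixes n k l :: nat and \<tau> :: "nat list"
  assumes perm: "is_perm_word n \<tau>" and length_runs: "length (runs \<tau>) = k + 1" and l_le_k: "l \<le> k"
begin

definition diag :: "nat \<Rightarrow> int" where
  "diag c = int k - int (run_idx \<tau> c) - int l"

lemma distinct_tau: "distinct \<tau>" and set_tau: "set \<tau> = {1..n}"
  using perm by (auto simp: is_perm_word_def)

lemma run_props:
  assumes "j \<le> k"
  shows "runs \<tau> ! j \<noteq> []" "sorted_wrt (<) (runs \<tau> ! j)" "distinct (runs \<tau> ! j)"
    "set (runs \<tau> ! j) \<subseteq> {1..n}"
proof -
  have m: "runs \<tau> ! j \<in> set (runs \<tau>)" using assms length_runs by simp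
  then show "runs \<tau> ! j \<noteq> []" "sorted_wrt (<) (runs \<tau> ! j)" "distinct (runs \<tau> ! j)"
    using runs_nonempty sorted_runs strict_sorted_iff by blast+
  have "set (runs \<tau> ! j) \<subseteq> set (concat (runs \<tau>))" using m by (auto simp del: concat_runs)
  then show "set (runs \<tau> ! j) \<subseteq> {1..n}" using set_tau by simp
qed

lemma runs_disjoint:
  assumes "i \<le> k" "j \<le> k" "i \<noteq> j"
  shows "set (runs \<tau> ! i) \<inter> set (runs \<tau> ! j) = {}"
proof -
  have dc: "distinct (concat (runs \<tau>))" using distinct_tau by simp
  have "[] \<notin> set (runs \<tau>)" using runs_nonempty by blast
  then have "removeAll [] (runs \<tau>) = runs \<tau>" by (simp add: removeAll_id)
  then have "distinct (runs \<tau>)" using dc distinct_concat_iff by metis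
  then have "runs \<tau> ! i \<noteq> runs \<tau> ! j" using assms length_runs by (simp add: nth_eq_iff_index_eq)
  moreover have "runs \<tau> ! i \<in> set (runs \<tau>)" "runs \<tau> ! j \<in> set (runs \<tau>)"
    using assms length_runs by auto
  ultimately show ?thesis using dc distinct_concat_iff by metis
qed

lemma run_idx_eq:
  assumes "j \<le> k" "c \<in> set (runs \<tau> ! j)"
  shows "run_idx \<tau> c = j"
  unfolding run_idx_def
proof (rule Least_equality)
  show "j < length (runs \<tau>) \<and> c \<in> set (runs \<tau> ! j)" using assms length_runs by simp
  show "j \<le> i" if i: "i < length (runs \<tau>) \<and> c \<in> set (runs \<tau> ! i)" for i
  proof (rule ccontr)
    assume "\<not> j \<le> i"
    then show False using runs_disjoint[of i j] i assms length_runs by auto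
  qed
qed

lemma run_idx_le: "c \<in> {1..n} \<Longrightarrow> run_idx \<tau> c \<le> k"
  and mem_run_idx: "c \<in> {1..n} \<Longrightarrow> c \<in> set (runs \<tau> ! run_idx \<tau> c)"
proof -
  assume "c \<in> {1..n}"
  then have "c \<in> set (concat (runs \<tau>))" using set_tau by simp
  then obtain r where "r \<in> set (runs \<tau>)" "c \<in> set r" by (auto simp del: concat_runs)
  then obtain j where "j < length (runs \<tau>)" "c \<in> set (runs \<tau> ! j)" by (metis in_set_conv_nth)
  then show "run_idx \<tau> c \<le> k" "c \<in> set (runs \<tau> ! run_idx \<tau> c)"
    using run_idx_eq[of j c] length_runs by auto
qed

lemma mem_run_iff: "j \<le> k \<Longrightarrow> c \<in> set (runs \<tau> ! j) \<longleftrightarrow> c \<in> {1..n} \<and> run_idx \<tau> c = j"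
  using run_idx_eq[of j c] mem_run_idx[of c] run_props(4)[of j] by auto

lemma card_run_filter: "j \<le> k \<Longrightarrow> card {x \<in> set (runs \<tau> ! j). P x} = length (filter P (runs \<tau> ! j))"
  using run_props[of j] by (subst distinct_length_filter) (auto intro!: arg_cong[where f=card])

lemma sched_eq:
  assumes "c \<in> {1..n}"
  defines "j \<equiv> run_idx \<tau> c"
  shows "sched l \<tau> c = (if k + 1 - l \<le> j then
       length (filter (\<lambda>x. x < c) (runs \<tau> ! j)) + length (filter (\<lambda>x. c < x) (runs \<tau> ! (j - 1)))
     else if j = k - l then length (filter (\<lambda>x. c \<le> x) (runs \<tau> ! j))
     else length (filter (\<lambda>x. c < x) (runs \<tau> ! j)) + length (filter (\<lambda>x. x < c) (runs \<tau> ! (j + 1))))"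
proof -
  have "j \<le> k" "c \<in> set (runs \<tau> ! j)" "sorted_wrt (<) (runs \<tau> ! j)"
    using run_idx_le mem_run_idx run_props assms by auto
  then show ?thesis
    unfolding sched_def Let_def length_runs j_def[symmetric]
    using dropWhile_neq_eq_filter l_le_k by (auto simp: Suc_diff_le)
qed

text \<open>Cars are inserted in increasing order of this key: first diagonal \<open>0\<close>, then the positive
  diagonals upwards, then the negative ones downwards; within a diagonal decreasingly when it is
  nonnegative and increasingly when it is negative.  So each car enters on top of the current
  configuration (\<open>top_insertion\<close>) or, once all nonnegative diagonals are filled, at its bottom
  (\<open>bottom_insertion\<close>).\<close>
definition insertion_key :: "nat \<Rightarrow> nat \<times> int \<times> int" where
  "insertion_key x =
     (if diag x = 0 then (0, 0, - int x) else if 0 < diag x then (1, diag x, - int x) else (2, - diag x, int x))"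

lemma insertion_key_inj: "insertion_key x = insertion_key y \<Longrightarrow> x = y"
  unfolding insertion_key_def by (auto split: if_splits)

definition down_set :: "nat \<Rightarrow> nat set" where
  "down_set c = {x \<in> {1..n}. insertion_key x \<le> insertion_key c}"

lemma dinv_gf_down_set_ground:
  fixes q :: "'a::comm_ring_1"
  assumes c: "c \<in> {1..n}" and diag_c: "diag c = 0"
  shows "dinv_gf diag (down_set c) q = qint (sched l \<tau> c) q * dinv_gf diag (down_set c - {c}) q"
proof -
  have A: "down_set c = {x \<in> {1..n}. diag x = 0 \<and> c \<le> x}"
    using diag_c by (auto simp: down_set_def insertion_key_def)
  interpret top_insertion diag "down_set c" c
    by unfold_locales (use c diag_c in \<open>auto simp: A\<close>)
  have j: "run_idx \<tau> c = k - l" using diag_c run_idx_le[OF c] l_le_k by (simp add: diag_def)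
  have "x \<in> set (runs \<tau> ! (k - l)) \<longleftrightarrow> x \<in> {1..n} \<and> diag x = 0" for x
    using mem_run_iff[of "k - l" x] run_idx_le[of x] l_le_k by (auto simp: diag_def)
  then have "down_set c = {x \<in> set (runs \<tau> ! (k - l)). c \<le> x}" by (auto simp: A)
  then have "card (down_set c) = sched l \<tau> c"
    using card_run_filter[of "k - l"] sched_eq[OF c] j l_le_k by auto
  moreover have "slots = down_set c - {c}" using diag_c unfolding slots_def by (auto simp: A)
  moreover have "0 < card (down_set c)" using c_in finite_A card_gt_0_iff by blast
  ultimately have "card slots + (if diag c = 0 then 1 else 0) = sched l \<tau> c"
    using c_in finite_A diag_c by (simp add: card_Suc_Diff1)
  then show ?thesis using dinv_gf_eq by simp
qed

lemma dinv_gf_down_set_higher: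
  fixes q :: "'a::comm_ring_1"
  assumes c: "c \<in> {1..n}" and diag_c: "0 < diag c"
  shows "dinv_gf diag (down_set c) q = qint (sched l \<tau> c) q * dinv_gf diag (down_set c - {c}) q"
proof -
  define j where "j = run_idx \<tau> c"
  have A: "down_set c = {x \<in> {1..n}. 0 \<le> diag x \<and> (diag x < diag c \<or> (diag x = diag c \<and> c \<le> x))}"
    using diag_c by (auto simp: down_set_def insertion_key_def)
  interpret top_insertion diag "down_set c" c
    by unfold_locales (use c diag_c in \<open>auto simp: A\<close>)
  have j: "j < k - l" using diag_c run_idx_le[OF c] l_le_k by (simp add: diag_def j_def)
  have "x \<in> set (runs \<tau> ! j) \<longleftrightarrow> x \<in> {1..n} \<and> diag x = diag c"
    and "x \<in> set (runs \<tau> ! (j + 1)) \<longleftrightarrow> x \<in> {1..n} \<and> diag x = diag c - 1" for x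
    using mem_run_iff[of j x] mem_run_iff[of "j + 1" x] j by (auto simp: diag_def j_def)
  then have "slots = {x \<in> set (runs \<tau> ! j). c < x} \<union> {x \<in> set (runs \<tau> ! (j + 1)). x < c}"
    using diag_c unfolding slots_def by (auto simp: A)
  moreover have "card \<dots> = card {x \<in> set (runs \<tau> ! j). c < x} + card {x \<in> set (runs \<tau> ! (j + 1)). x < c}"
    using runs_disjoint[of j "j + 1"] j by (intro card_Un_disjoint) auto
  ultimately have "card slots + (if diag c = 0 then 1 else 0) = sched l \<tau> c"
    using diag_c card_run_filter[of j] card_run_filter[of "j + 1"] sched_eq[OF c] j
    by (auto simp: j_def)
  then show ?thesis using dinv_gf_eq by simp
qed

lemma dinv_gf_down_set_lower:
  fixes q :: "'a::comm_ring_1"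
  assumes c: "c \<in> {1..n}" and diag_c: "diag c < 0"
  shows "dinv_gf diag (down_set c) q = qint (sched l \<tau> c) q * dinv_gf diag (down_set c - {c}) q"
proof -
  define j where "j = run_idx \<tau> c"
  have A: "down_set c = {x \<in> {1..n}. diag c < diag x \<or> (diag x = diag c \<and> x \<le> c)}"
    using diag_c by (auto simp: down_set_def insertion_key_def)
  interpret bottom_insertion diag "down_set c" c
    by unfold_locales (use c diag_c in \<open>auto simp: A\<close>)
  have j: "k - l < j" "j \<le> k" using diag_c run_idx_le[OF c] l_le_k by (auto simp: diag_def j_def)
  have "x \<in> set (runs \<tau> ! j) \<longleftrightarrow> x \<in> {1..n} \<and> diag x = diag c"
    and "x \<in> set (runs \<tau> ! (j - 1)) \<longleftrightarrow> x \<in> {1..n} \<and> diag x = diag c + 1" for x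
    using mem_run_iff[of j x] mem_run_iff[of "j - 1" x] run_idx_le[of x] j
    by (auto simp: diag_def j_def)
  then have "slots = {x \<in> set (runs \<tau> ! j). x < c} \<union> {x \<in> set (runs \<tau> ! (j - 1)). c < x}"
    unfolding slots_def by (auto simp: A)
  moreover have "card \<dots> = card {x \<in> set (runs \<tau> ! j). x < c} + card {x \<in> set (runs \<tau> ! (j - 1)). c < x}"
    using runs_disjoint[of j "j - 1"] j by (intro card_Un_disjoint) auto
  ultimately have "card slots = sched l \<tau> c"
    using card_run_filter[of j] card_run_filter[of "j - 1"] sched_eq[OF c] j by (auto simp: j_def)
  then show ?thesis using dinv_gf_eq by simp
qed

lemma dinv_gf_down_set:
  fixes q :: "'a::comm_ring_1"
  assumes "c \<in> {1..n}"
  shows "dinv_gf diag (down_set c) q = qint (sched l \<tau> c) q * dinv_gf diag (down_set c - {c}) q"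
  using dinv_gf_down_set_ground[OF assms] dinv_gf_down_set_higher[OF assms]
    dinv_gf_down_set_lower[OF assms]
  by (cases "diag c" "0::int" rule: linorder_cases) auto

lemma dinv_gf_down_closed:
  fixes q :: "'a::comm_ring_1"
  assumes "A \<subseteq> {1..n}"
    and "\<And>x y. x \<in> {1..n} \<Longrightarrow> y \<in> A \<Longrightarrow> insertion_key x \<le> insertion_key y \<Longrightarrow> x \<in> A"
  shows "dinv_gf diag A q = (\<Prod>c\<in>A. qint (sched l \<tau> c) q)"
  using assms
proof (induction "card A" arbitrary: A)
  case 0
  then have "A = {}" using finite_subset[of A "{1..n}"] by auto
  then show ?case by (simp add: dinv_gf_empty)
next
  case (Suc m)
  have fin: "finite A" using Suc.prems finite_subset by blast
  then obtain c where c: "c \<in> A" "insertion_key c = Max (insertion_key ` A)"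
    using Suc.hyps(2) Max_in[of "insertion_key ` A"] by fastforce
  then have le: "insertion_key y \<le> insertion_key c" if "y \<in> A" for y using fin that by auto
  have c_range: "c \<in> {1..n}" using Suc.prems c by auto
  have A: "A = down_set c"
  proof
    show "A \<subseteq> down_set c" using Suc.prems(1) le unfolding down_set_def by blast
    show "down_set c \<subseteq> A" using Suc.prems(2)[OF _ c(1)] unfolding down_set_def by blast
  qed
  have "dinv_gf diag (A - {c}) q = (\<Prod>c\<in>A - {c}. qint (sched l \<tau> c) q)"
  proof (rule Suc.hyps(1))
    show "m = card (A - {c})" using Suc.hyps(2) fin c by simp
    show "A - {c} \<subseteq> {1..n}" using Suc.prems by auto
    show "x \<in> A - {c}" if "x \<in> {1..n}" "y \<in> A - {c}" "insertion_key x \<le> insertion_key y" for x y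
    proof -
      have "x \<noteq> c" using that le[of y] insertion_key_inj[of y c] by auto
      then show ?thesis using that Suc.prems(2)[of x y] by auto
    qed
  qed
  moreover have "dinv_gf diag A q = qint (sched l \<tau> c) q * dinv_gf diag (A - {c}) q"
    using dinv_gf_down_set[OF c_range] unfolding A .
  ultimately show ?case using fin c by (simp add: prod.remove)
qed

lemma dinv_gf_eq_prod: "dinv_gf diag {1..n} q = (\<Prod>c\<in>{1..n}. qint (sched l \<tau> c) (q::'a::comm_ring_1))"
  by (rule dinv_gf_down_closed) auto

lemma sorted_diag_tau: "sorted (map (\<lambda>c. (- diag c, c)) \<tau>)"
proof -
  have "sorted_wrt (\<lambda>a b. run_idx \<tau> a < run_idx \<tau> b \<or> (run_idx \<tau> a = run_idx \<tau> b \<and> a < b)) (concat (runs \<tau>))"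
    by (rule sorted_wrt_concat_blocks[where m=0])
       (use run_idx_eq length_runs sorted_runs in auto)
  then have "sorted_wrt (\<lambda>a b. run_idx \<tau> a < run_idx \<tau> b \<or> (run_idx \<tau> a = run_idx \<tau> b \<and> a < b)) \<tau>"
    by simp
  then have "sorted_wrt (\<lambda>a b. (- diag a, a) \<le> (- diag b, b)) \<tau>"
    by (rule sorted_wrt_mono_rel[rotated]) (auto simp: diag_def)
  then show ?thesis by (simp add: sorted_map)
qed

lemma diag_determined:
  assumes w: "admissible D w" "distinct w" "set w = {1..n}"
    and diagword: "sort_key (\<lambda>c. (- D c, c)) [1..<n+1] = \<tau>"
    and deviation: "Max ((\<lambda>c. - D c) ` {1..n}) = int l"
    and c: "c \<in> {1..n}"
  shows "D c = diag c"
proof -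
  let ?A = "{1..n}" let ?hi = "Max (D ` ?A)" and ?lo = "Min (D ` ?A)"
  have ne: "?A \<noteq> {}" using c by auto
  have lo: "?lo = - int l"
  proof (rule Min_eqI)
    show "- int l \<le> y" if "y \<in> D ` ?A" for y
      using that deviation Max_ge[of "(\<lambda>c. - D c) ` ?A"] by force
    show "- int l \<in> D ` ?A"
      using deviation Max_in[of "(\<lambda>c. - D c) ` ?A"] ne by (force simp: image_iff)
  qed simp
  have lo_le: "?lo \<le> D c" and le_hi: "D c \<le> ?hi" using c by auto
  have "?lo \<in> D ` ?A" "?hi \<in> D ` ?A" using ne by (intro Min_in Max_in; simp)+
  then have "\<exists>a\<in>?A. \<exists>b\<in>?A. D a = v + 1 \<and> D b = v \<and> b < a" if "?lo \<le> v" "v < ?hi" for v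
  proof -
    obtain x y where "x \<in> ?A" "D x = ?lo" "y \<in> ?A" "D y = ?hi"
      using \<open>?lo \<in> D ` ?A\<close> \<open>?hi \<in> D ` ?A\<close> by (metis imageE)
    then show ?thesis using admissible_crossing[OF w(1), where x=x and y=y and v=v] that w(3) by auto
  qed
  moreover have "\<tau> = concat (diag_levels D ?A)"
    using sort_key_diag_eq_concat_levels[where D=D and A="?A" and xs="[1..<n+1]"] diagword ne
    by (simp add: atLeastLessThanSuc_atLeastAtMost del: upt_Suc)
  ultimately have runs_eq: "runs \<tau> = diag_levels D ?A"
    using runs_concat_diag_levels[where D=D and A="?A"] ne by simp
  then have k: "int k = ?hi - ?lo"
    using length_runs lo_le le_hi unfolding diag_levels_def by simp
  have "run_idx \<tau> c = nat (?hi - D c)"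
    using diag_levels_level[where D=D and A="?A" and c=c] c runs_eq length_runs by (auto intro!: run_idx_eq)
  then show ?thesis using k lo le_hi by (simp add: diag_def)
qed

lemma deviation_diag: "Max ((\<lambda>c. - diag c) ` {1..n}) = int l"
proof (rule Max_eqI)
  show "y \<le> int l" if "y \<in> (\<lambda>c. - diag c) ` {1..n}" for y
    using that run_idx_le by (force simp: diag_def)
  obtain c where "c \<in> set (runs \<tau> ! k)" using run_props(1)[of k] by (meson last_in_set order.refl)
  then have "c \<in> {1..n}" "run_idx \<tau> c = k" using mem_run_iff[of k c] by auto
  then show "int l \<in> (\<lambda>c. - diag c) ` {1..n}" by (intro image_eqI[of _ _ c]) (auto simp: diag_def)
qed simp

lemma diagword_pref_of_word_diag:
  assumes "w \<in> admissible_words diag {1..n}"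
  shows "diagword n (pref_of_word diag n w) = \<tau>"
  unfolding diagword_def
proof (rule sort_key_inj_key_eq)
  have w: "admissible diag w" "distinct w" "set w = {1..n}" using assms by (auto simp: admissible_words_def)
  show "mset [1..<n + 1] = mset \<tau>"
    using distinct_tau set_tau set_eq_iff_mset_eq_distinct[of "[1..<n+1]" \<tau>] by auto
  show "inj_on (\<lambda>c. (- car_diag n (pref_of_word diag n w) c, c)) (set [1..<n + 1])"
    by (auto simp: inj_on_def)
  have e: "map (\<lambda>c. (- car_diag n (pref_of_word diag n w) c, c)) \<tau> = map (\<lambda>c. (- diag c, c)) \<tau>"
    using car_diag_pref_of_word[OF w] set_tau by (intro map_cong) auto
  show "sorted (map (\<lambda>c. (- car_diag n (pref_of_word diag n w) c, c)) \<tau>)"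
    unfolding e by (rule sorted_diag_tau)
qed

lemma sum_height_eq_maj: "(\<Sum>c\<in>{1..n}. k - run_idx \<tau> c) = maj \<tau>"
proof -
  have "{1..n} = (\<Union>j<k+1. set (runs \<tau> ! j))"
    using mem_run_idx run_idx_le run_props(4) by (fastforce simp: less_Suc_eq_le)
  then have "(\<Sum>c\<in>{1..n}. k - run_idx \<tau> c) = (\<Sum>j<k+1. \<Sum>c\<in>set (runs \<tau> ! j). k - run_idx \<tau> c)"
    using runs_disjoint by (simp add: sum.UNION_disjoint)
  also have "\<dots> = (\<Sum>j<k+1. length (runs \<tau> ! j) * (k - j))"
  proof (rule sum.cong[OF refl])
    fix j assume "j \<in> {..<k+1}"
    then have "(\<Sum>c\<in>set (runs \<tau> ! j). k - run_idx \<tau> c) = (\<Sum>c\<in>set (runs \<tau> ! j). k - j)"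
      using run_idx_eq by (intro sum.cong) (auto simp: less_Suc_eq_le)
    then show "(\<Sum>c\<in>set (runs \<tau> ! j). k - run_idx \<tau> c) = length (runs \<tau> ! j) * (k - j)"
      using run_props(3) \<open>j \<in> {..<k+1}\<close> by (simp add: distinct_card)
  qed
  also have "\<dots> = maj \<tau>" using maj_eq_sum_runs[OF distinct_tau] length_runs by simp
  finally show ?thesis .
qed

lemma card_negative_diag: "card {c \<in> {1..n}. diag c < 0} = (\<Sum>i<l. rho \<tau> i)"
proof -
  have "{c \<in> {1..n}. diag c < 0} = (\<Union>i<l. set (runs \<tau> ! (k - i)))"
  proof (intro equalityI subsetI)
    fix c assume "c \<in> {c \<in> {1..n}. diag c < 0}"
    moreover from this have "run_idx \<tau> c \<le> k" using run_idx_le by auto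
    ultimately have "c \<in> {1..n}" "k - run_idx \<tau> c < l" "run_idx \<tau> c \<le> k"
      unfolding diag_def by auto
    then show "c \<in> (\<Union>i<l. set (runs \<tau> ! (k - i)))"
      using mem_run_idx by (intro UN_I[of "k - run_idx \<tau> c"]) auto
  next
    fix c assume "c \<in> (\<Union>i<l. set (runs \<tau> ! (k - i)))"
    then obtain i where "i < l" "c \<in> {1..n}" "run_idx \<tau> c = k - i"
      using mem_run_iff by fastforce
    then show "c \<in> {c \<in> {1..n}. diag c < 0}" using l_le_k by (auto simp: diag_def)
  qed
  also have "card \<dots> = (\<Sum>i<l. card (set (runs \<tau> ! (k - i))))"
    using runs_disjoint l_le_k by (intro card_UN_disjoint) auto
  also have "\<dots> = (\<Sum>i<l. rho \<tau> i)"
    using run_props(3) by (intro sum.cong) (auto simp: rho_def length_runs distinct_card)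
  finally show ?thesis .
qed

lemma pref_of_word_diag_bij:
  "bij_betw (pref_of_word diag n) (admissible_words diag {1..n})
     {f \<in> pref_fns n. diagword n f = \<tau> \<and> deviation n f = int l}"
proof -
  have left: "reading_word n (pref_of_word diag n w) = w" if "w \<in> admissible_words diag {1..n}" for w
    using that reading_word_pref_of_word by (auto simp: admissible_words_def)
  have image: "pref_of_word diag n ` admissible_words diag {1..n}
      \<subseteq> {f \<in> pref_fns n. diagword n f = \<tau> \<and> deviation n f = int l}"
    using pref_of_word_in_pref_fns diagword_pref_of_word_diag deviation_pref_of_word deviation_diag
    by (auto simp: admissible_words_def)
  have right: "pref_of_word diag n (reading_word n f) = f \<and> reading_word n f \<in> admissible_words diag {1..n}"
    if "f \<in> pref_fns n" "diagword n f = \<tau>" "deviation n f = int l" for f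
  proof
    have diag_f: "car_diag n f c = diag c" if "c \<in> {1..n}" for c
      using diag_determined[OF admissible_reading_word[OF \<open>f \<in> pref_fns n\<close>]
          distinct_reading_word set_reading_word] \<open>diagword n f = \<tau>\<close> \<open>deviation n f = int l\<close> that
      by (simp add: diagword_def deviation_def atLeastLessThanSuc_atLeastAtMost)
    then show "pref_of_word diag n (reading_word n f) = f"
      using pref_of_reading_word[OF \<open>f \<in> pref_fns n\<close>] pref_of_word_cong[of n "car_diag n f" diag] by metis
    show "reading_word n f \<in> admissible_words diag {1..n}"
      using admissible_reading_word[OF \<open>f \<in> pref_fns n\<close>] diag_f distinct_reading_word set_reading_word
        admissible_cong[of "reading_word n f" "car_diag n f" diag]
      by (auto simp: admissible_words_def)
  qed
  show ?thesis using left image right by (intro bij_betw_byWitness[where f'="reading_word n"]) auto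
qed

lemma area_pref_of_word_diag:
  assumes "w \<in> admissible_words diag {1..n}"
  shows "area n (pref_of_word diag n w) = int (maj \<tau>)"
proof -
  have "area n (pref_of_word diag n w) = (\<Sum>c\<in>{1..n}. int (k - run_idx \<tau> c))"
    using assms area_pref_of_word deviation_diag run_idx_le
    by (auto simp: admissible_words_def diag_def intro!: sum.cong)
  then show ?thesis by (simp add: sum_height_eq_maj[symmetric])
qed

lemma dinv_pref_of_word_diag:
  assumes "w \<in> admissible_words diag {1..n}"
  shows "dinv n (pref_of_word diag n w) = word_dinv diag w + (\<Sum>i<l. rho \<tau> i)"
  using assms primary_secondary_dinv_pref_of_word tertiary_dinv_pref_of_word card_negative_diag
  by (simp add: admissible_words_def dinv_def)

lemma area_dinv_sum:
  fixes q t :: "'a::comm_ring_1"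
  shows "(\<Sum>f\<in>{f \<in> pref_fns n. diagword n f = \<tau> \<and> deviation n f = int l}. t ^ nat (area n f) * q ^ dinv n f)
       = t ^ maj \<tau> * q ^ (\<Sum>i<l. rho \<tau> i) * (\<Prod>c\<in>{1..n}. qint (sched l \<tau> c) q)"
proof -
  have "(\<Sum>f\<in>{f \<in> pref_fns n. diagword n f = \<tau> \<and> deviation n f = int l}. t ^ nat (area n f) * q ^ dinv n f)
      = (\<Sum>w\<in>admissible_words diag {1..n}. t ^ maj \<tau> * q ^ (\<Sum>i<l. rho \<tau> i) * q ^ word_dinv diag w)"
    by (simp add: sum.reindex_bij_betw[OF pref_of_word_diag_bij, symmetric] area_pref_of_word_diag
        dinv_pref_of_word_diag power_add mult_ac)
  also have "\<dots> = t ^ maj \<tau> * q ^ (\<Sum>i<l. rho \<tau> i) * dinv_gf diag {1..n} q"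
    by (simp add: dinv_gf_def sum_distrib_left)
  also have "\<dots> = t ^ maj \<tau> * q ^ (\<Sum>i<l. rho \<tau> i) * (\<Prod>c\<in>{1..n}. qint (sched l \<tau> c) q)"
    by (simp only: dinv_gf_eq_prod)
  finally show ?thesis .
qed

end

theorem theorem2p2:
  fixes n k l :: nat and \<tau> :: "nat list" and q t :: "'a::comm_ring_1"
  assumes "n \<ge> 1" and "is_perm_word n \<tau>"
    and "length (runs \<tau>) = k + 1" and "l \<le> k"
  shows "(\<Sum>f\<in>{f \<in> pref_fns n. diagword n f = \<tau> \<and> deviation n f = int l}.
            t ^ nat (area n f) * q ^ dinv n f)
       = t ^ maj \<tau> * q ^ (\<Sum>i<l. rho \<tau> i) * (\<Prod>c\<in>{1..n}. qint (sched l \<tau> c) q)"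
proof -
  interpret perm_with_runs n k l \<tau> using assms by unfold_locales
  show ?thesis by (rule area_dinv_sum)
qed

end
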